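(* For each $n=1,2,\dots$ there is a function $f:\{-1,1\}^n\to \{z\in\mathbb{C}:\ |z|=1\}$ with \[ I(f)<1 \qquad\text{and}\qquad H(|\hat f|^2)>\frac{n}{n+1}\log n. \]
   Context: Equip $\{-1,1\}^n$ with the uniform (normalized counting) probability measure. Let $\varepsilon_i:\{-1,1\}^n\to\{-1,1\}$ be the $i$-th coordinate projection, and for $A\subseteq[n]=\{1,\dots,n\}$ let $W_A=\prod_{i\in A}\varepsilon_i$. For $g:\{-1,1\}^n\to\mathbb{C}$, the Fourier–Walsh coefficients are $\hat g(A)=2^{-n}\sum_{\delta\in\{-1,1\}^n} g(\delta)W_A(\delta)$, so $g=\sum_{A\subseteq[n]}\hat g(A)W_A$. The influence is $I(g)=\sum_{A\subseteq[n]}|\hat g(A)|^2|A|$, and the Fourier entropy is $H(|\hat g|^2)=-\sum_{A\subseteq[n]}|\hat g(A)|^2\log|\hat g(A)|^2$ with $0\log 0=0$. Logarithms are to base $2$. *)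

theory Defs
  imports Complex_Main
begin

text \<open>Points of the cube \{-1,1\}^n are represented as functions nat => int whose
  values at coordinates 1..n lie in \{-1,1\} and which are 1 elsewhere
  (an extensional encoding, so that cube n is in bijection with \{-1,1\}^n).\<close>

definition cube :: "nat \<Rightarrow> (nat \<Rightarrow> int) set" where
  "cube n = {\<delta>. (\<forall>i\<in>{1..n}. \<delta> i = 1 \<or> \<delta> i = -1) \<and> (\<forall>i. i \<notin> {1..n} \<longrightarrow> \<delta> i = 1)}"

definition walsh :: "nat set \<Rightarrow> (nat \<Rightarrow> int) \<Rightarrow> complex" where
  "walsh A \<delta> = (\<Prod>i\<in>A. of_int (\<delta> i))"

definition fourier :: "nat \<Rightarrow> ((nat \<Rightarrow> int) \<Rightarrow> complex) \<Rightarrow> nat set \<Rightarrow> complex" where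
  "fourier n g A = (\<Sum>\<delta>\<in>cube n. g \<delta> * walsh A \<delta>) / 2 ^ n"

definition influence :: "nat \<Rightarrow> ((nat \<Rightarrow> int) \<Rightarrow> complex) \<Rightarrow> real" where
  "influence n g = (\<Sum>A\<in>Pow {1..n}. (cmod (fourier n g A))\<^sup>2 * real (card A))"

definition fourier_entropy :: "nat \<Rightarrow> ((nat \<Rightarrow> int) \<Rightarrow> complex) \<Rightarrow> real" where
  "fourier_entropy n g = - (\<Sum>A\<in>Pow {1..n}.
      (let p = (cmod (fourier n g A))\<^sup>2 in if p = 0 then 0 else p * log 2 p))"

end

(* Take the product function f(\<delta>) = g(\<delta>_1) ... g(\<delta>_n), where g(1), g(-1) = sqrt (1 - p) +/- i sqrt p
   are unimodular. Its Fourier coefficients factor coordinatewise, and |fhat(A)|^2 = p^|A| (1 - p)^(n - |A|)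
   is the law of a p-biased random subset of [n]. Hence I(f) = n p and H(|fhat|^2) = n h(p), with h the
   binary entropy. For p = 1/(n+1) this gives I(f) = n/(n+1) < 1, while the term -n p log p of n h(p)
   alone equals n/(n+1) log (n+1) > n/(n+1) log n. *)

theory Submission
  imports Defs "HOL-Library.FuncSet"
begin

lemma cube_eq_image_PiE:
  "cube n = (\<lambda>h i. if i \<in> {1..n} then h i else 1) ` PiE {1..n} (\<lambda>_. {1, -1})"
proof (intro equalityI subsetI)
  fix \<delta> assume "\<delta> \<in> cube n"
  then have "\<delta> = (\<lambda>i. if i \<in> {1..n} then restrict \<delta> {1..n} i else 1)"
    and "restrict \<delta> {1..n} \<in> PiE {1..n} (\<lambda>_. {1, -1})"
    by (auto simp: cube_def fun_eq_iff)
  then show "\<delta> \<in> (\<lambda>h i. if i \<in> {1..n} then h i else 1) ` PiE {1..n} (\<lambda>_. {1, -1})"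
    by blast
next
  fix \<delta> :: "nat \<Rightarrow> int" assume "\<delta> \<in> (\<lambda>h i. if i \<in> {1..n} then h i else 1) ` PiE {1..n} (\<lambda>_. {1, -1})"
  then obtain h where "h \<in> PiE {1..n} (\<lambda>_. {1, -1})" and "\<delta> = (\<lambda>i. if i \<in> {1..n} then h i else 1)"
    by blast
  then have "\<forall>i\<in>{1..n}. \<delta> i \<in> {1, -1}" and "\<forall>i. i \<notin> {1..n} \<longrightarrow> \<delta> i = 1"
    using PiE_mem[of h "{1..n}" "\<lambda>_. {1, -1}"] by simp_all
  then show "\<delta> \<in> cube n"
    by (simp add: cube_def)
qed

lemma sum_cube_prod:
  fixes h :: "nat \<Rightarrow> int \<Rightarrow> 'a :: comm_semiring_1"
  shows "(\<Sum>\<delta>\<in>cube n. \<Prod>i\<in>{1..n}. h i (\<delta> i)) = (\<Prod>i\<in>{1..n}. h i 1 + h i (-1))"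
proof -
  let ?extend = "\<lambda>g i. if i \<in> {1..n} then g i else (1::int)"
  have "inj_on ?extend (PiE {1..n} (\<lambda>_. {1, -1}))"
  proof (rule inj_onI)
    fix g g' assume g: "g \<in> PiE {1..n} (\<lambda>_. {1, -1})" and g': "g' \<in> PiE {1..n} (\<lambda>_. {1, -1})"
      and eq: "?extend g = ?extend g'"
    show "g = g'"
    proof (rule PiE_ext[OF g g'])
      fix i assume "i \<in> {1..n}"
      then show "g i = g' i" using fun_cong[OF eq, of i] by simp
    qed
  qed
  then have "(\<Sum>\<delta>\<in>cube n. \<Prod>i\<in>{1..n}. h i (\<delta> i))
      = (\<Sum>g\<in>PiE {1..n} (\<lambda>_. {1, -1}). \<Prod>i\<in>{1..n}. h i (?extend g i))"
    by (simp only: cube_eq_image_PiE sum.reindex o_def)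
  also have "\<dots> = (\<Sum>g\<in>PiE {1..n} (\<lambda>_. {1, -1}). \<Prod>i\<in>{1..n}. h i (g i))"
    by (intro sum.cong refl prod.cong) simp
  also have "\<dots> = (\<Prod>i\<in>{1..n}. \<Sum>x\<in>{1, -1}. h i x)"
    by (rule prod_sum_PiE[symmetric]) auto
  finally show ?thesis by simp
qed

definition binomial_weight :: "real \<Rightarrow> 'a set \<Rightarrow> 'a set \<Rightarrow> real" where
  "binomial_weight p S A = p ^ card A * (1 - p) ^ card (S - A)"

lemma prod_if_mem_const:
  fixes a b :: "'b :: comm_monoid_mult"
  assumes "finite S" "A \<subseteq> S"
  shows "(\<Prod>i\<in>S. if i \<in> A then a else b) = a ^ card A * b ^ card (S - A)"
proof -
  have "S \<inter> A = A" "S \<inter> - A = S - A" using assms(2) by auto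
  then show ?thesis
    using prod.If_cases[OF assms(1), of "\<lambda>i. i \<in> A" "\<lambda>_. a" "\<lambda>_. b"] by simp
qed

lemma sum_binomial_weight:
  fixes p :: real
  assumes "finite S"
  shows "(\<Sum>A\<in>Pow S. binomial_weight p S A) = 1"
  using prod_add[OF assms, of "\<lambda>_. p" "\<lambda>_. 1 - p"] by (simp add: binomial_weight_def)

lemma sum_binomial_weight_mem:
  fixes p :: real
  assumes "finite S" "j \<in> S"
  shows "(\<Sum>A\<in>Pow S. if j \<in> A then binomial_weight p S A else 0) = p"
proof -
  let ?q = "\<lambda>i. if i = j then 0 else 1 - p"
  have "(\<Sum>A\<in>Pow S. if j \<in> A then binomial_weight p S A else 0)
      = (\<Sum>A\<in>Pow S. (\<Prod>i\<in>A. p) * (\<Prod>i\<in>S - A. ?q i))"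
  proof (rule sum.cong[OF refl])
    fix A assume "A \<in> Pow S"
    show "(if j \<in> A then binomial_weight p S A else 0) = (\<Prod>i\<in>A. p) * (\<Prod>i\<in>S - A. ?q i)"
    proof (cases "j \<in> A")
      case True
      then have "(\<Prod>i\<in>S - A. ?q i) = (\<Prod>i\<in>S - A. 1 - p)" by (intro prod.cong) auto
      with True show ?thesis by (simp add: binomial_weight_def)
    next
      case False
      then have "(\<Prod>i\<in>S - A. ?q i) = 0" using assms by (intro prod_zero bexI[of _ j]) auto
      with False show ?thesis by simp
    qed
  qed
  also have "\<dots> = (\<Prod>i\<in>S. p + ?q i)"
    by (rule prod_add[OF assms(1), symmetric])
  also have "\<dots> = (\<Prod>i\<in>S. if i = j then p else 1)"
    by (rule prod.cong) auto
  finally show ?thesis using assms by simp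
qed

lemma sum_binomial_weight_card:
  fixes p :: real
  assumes "finite S"
  shows "(\<Sum>A\<in>Pow S. binomial_weight p S A * card A) = card S * p"
proof -
  have "(\<Sum>A\<in>Pow S. binomial_weight p S A * card A)
      = (\<Sum>A\<in>Pow S. \<Sum>j\<in>S. if j \<in> A then binomial_weight p S A else 0)"
  proof (rule sum.cong[OF refl])
    fix A assume "A \<in> Pow S"
    then have "card A = card (S \<inter> A)" by (simp add: Int_absorb1)
    then show "binomial_weight p S A * card A = (\<Sum>j\<in>S. if j \<in> A then binomial_weight p S A else 0)"
      by (simp add: sum.If_cases[OF assms] mult.commute)
  qed
  also have "\<dots> = (\<Sum>j\<in>S. \<Sum>A\<in>Pow S. if j \<in> A then binomial_weight p S A else 0)"
    by (rule sum.swap)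
  also have "\<dots> = card S * p"
    using assms by (simp add: sum_binomial_weight_mem)
  finally show ?thesis .
qed

lemma sum_binomial_weight_log:
  fixes p :: real
  assumes "finite S" "0 < p" "p < 1"
  shows "(\<Sum>A\<in>Pow S. binomial_weight p S A * log 2 (binomial_weight p S A))
       = card S * (p * log 2 p + (1 - p) * log 2 (1 - p))"
proof -
  let ?w = "binomial_weight p S"
  have "?w A * log 2 (?w A) = ?w A * card A * (log 2 p - log 2 (1 - p)) + ?w A * card S * log 2 (1 - p)"
    if "A \<in> Pow S" for A
  proof -
    have "card (S - A) = card S - card A" "card A \<le> card S"
      using that assms(1) by (auto simp: card_Diff_subset finite_subset card_mono)
    then show ?thesis
      using assms by (simp add: binomial_weight_def log_mult log_nat_power of_nat_diff algebra_simps)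
  qed
  then have "(\<Sum>A\<in>Pow S. ?w A * log 2 (?w A))
      = (\<Sum>A\<in>Pow S. ?w A * card A) * (log 2 p - log 2 (1 - p)) + (\<Sum>A\<in>Pow S. ?w A) * card S * log 2 (1 - p)"
    by (simp add: sum.distrib sum_distrib_right)
  also have "\<dots> = card S * p * (log 2 p - log 2 (1 - p)) + card S * log 2 (1 - p)"
    by (simp only: sum_binomial_weight[OF assms(1)] sum_binomial_weight_card[OF assms(1)] mult_1)
  finally show ?thesis by (simp add: algebra_simps)
qed

lemma parallelogram_cmod:
  "(cmod ((a + b) / 2))\<^sup>2 + (cmod ((a - b) / 2))\<^sup>2 = ((cmod a)\<^sup>2 + (cmod b)\<^sup>2) / 2"
  unfolding cmod_power2 by (simp add: power2_eq_square field_simps)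

definition tensor_power :: "nat \<Rightarrow> (int \<Rightarrow> complex) \<Rightarrow> (nat \<Rightarrow> int) \<Rightarrow> complex" where
  "tensor_power n g \<delta> = (\<Prod>i\<in>{1..n}. g (\<delta> i))"

lemma walsh_eq_prod:
  assumes "A \<subseteq> {1..n}"
  shows "walsh A \<delta> = (\<Prod>i\<in>{1..n}. if i \<in> A then of_int (\<delta> i) else 1)"
proof -
  have "{1..n} \<inter> A = A" using assms by auto
  then show ?thesis
    unfolding walsh_def using prod.inter_restrict[of "{1..n}" "\<lambda>i. of_int (\<delta> i)" A] by simp
qed

lemma fourier_tensor_power:
  assumes "A \<subseteq> {1..n}"
  shows "fourier n (tensor_power n g) A
       = ((g 1 - g (-1)) / 2) ^ card A * ((g 1 + g (-1)) / 2) ^ card ({1..n} - A)"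
proof -
  let ?h = "\<lambda>i x. g x * (if i \<in> A then of_int x else 1)"
  have "(\<Sum>\<delta>\<in>cube n. tensor_power n g \<delta> * walsh A \<delta>) = (\<Sum>\<delta>\<in>cube n. \<Prod>i\<in>{1..n}. ?h i (\<delta> i))"
    using assms by (simp add: tensor_power_def walsh_eq_prod prod.distrib)
  also have "\<dots> = (\<Prod>i\<in>{1..n}. ?h i 1 + ?h i (-1))"
    by (rule sum_cube_prod)
  also have "\<dots> = (\<Prod>i\<in>{1..n}. 2 * (if i \<in> A then (g 1 - g (-1)) / 2 else (g 1 + g (-1)) / 2))"
    by (rule prod.cong) auto
  also have "\<dots> = 2 ^ n * (\<Prod>i\<in>{1..n}. if i \<in> A then (g 1 - g (-1)) / 2 else (g 1 + g (-1)) / 2)"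
    by (simp add: prod.distrib)
  finally show ?thesis
    using assms by (simp add: fourier_def prod_if_mem_const)
qed

lemma norm_tensor_power:
  assumes "cmod (g 1) = 1" "cmod (g (-1)) = 1" "\<delta> \<in> cube n"
  shows "cmod (tensor_power n g \<delta>) = 1"
proof -
  have "cmod (g (\<delta> i)) = 1" if "i \<in> {1..n}" for i
  proof -
    have "\<delta> i = 1 \<or> \<delta> i = -1" using assms(3) that by (simp add: cube_def)
    with assms(1,2) show ?thesis by auto
  qed
  then show ?thesis by (simp add: tensor_power_def flip: prod_norm)
qed

lemma spectral_weight_tensor_power:
  assumes "cmod (g 1) = 1" "cmod (g (-1)) = 1" "(cmod ((g 1 - g (-1)) / 2))\<^sup>2 = p" "A \<subseteq> {1..n}"
  shows "(cmod (fourier n (tensor_power n g) A))\<^sup>2 = binomial_weight p {1..n} A"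
proof -
  have "(cmod ((g 1 + g (-1)) / 2))\<^sup>2 = 1 - p"
    using parallelogram_cmod[of "g 1" "g (-1)"] assms(1-3) by simp
  moreover have "(x ^ k)\<^sup>2 = (x\<^sup>2) ^ k" for x :: real and k
    by (metis power_mult mult.commute)
  ultimately show ?thesis
    using assms(3,4) by (simp add: fourier_tensor_power binomial_weight_def norm_mult norm_power power_mult_distrib)
qed

lemma influence_tensor_power:
  assumes "cmod (g 1) = 1" "cmod (g (-1)) = 1" "(cmod ((g 1 - g (-1)) / 2))\<^sup>2 = p"
  shows "influence n (tensor_power n g) = n * p"
proof -
  have "influence n (tensor_power n g) = (\<Sum>A\<in>Pow {1..n}. binomial_weight p {1..n} A * card A)"
    unfolding influence_def using assms by (intro sum.cong) (auto simp: spectral_weight_tensor_power)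
  also have "\<dots> = n * p"
    by (simp only: sum_binomial_weight_card[OF finite_atLeastAtMost]) simp
  finally show ?thesis .
qed

lemma fourier_entropy_tensor_power:
  assumes "cmod (g 1) = 1" "cmod (g (-1)) = 1" "(cmod ((g 1 - g (-1)) / 2))\<^sup>2 = p"
    and "0 < p" "p < 1"
  shows "fourier_entropy n (tensor_power n g) = - (n * (p * log 2 p + (1 - p) * log 2 (1 - p)))"
proof -
  have "binomial_weight p {1..n} A > 0" for A
    using assms(4,5) by (simp add: binomial_weight_def)
  then have "fourier_entropy n (tensor_power n g)
      = - (\<Sum>A\<in>Pow {1..n}. binomial_weight p {1..n} A * log 2 (binomial_weight p {1..n} A))"
    unfolding fourier_entropy_def using assms(1-3)
    by (intro arg_cong[where f = uminus] sum.cong) (auto simp: spectral_weight_tensor_power Let_def)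
  then show ?thesis
    using assms(4,5) by (simp add: sum_binomial_weight_log)
qed

lemma binary_entropy_inverse_succ_gt:
  fixes N :: real
  assumes "N \<ge> 1" "p = 1 / (N + 1)"
  shows "N / (N + 1) * log 2 N < - (N * (p * log 2 p + (1 - p) * log 2 (1 - p)))"
proof -
  have "- (N * (p * log 2 p)) = N / (N + 1) * log 2 (N + 1)"
    using assms by (simp add: log_divide)
  moreover have "- (N * ((1 - p) * log 2 (1 - p))) \<ge> 0"
  proof -
    have "0 < p" "p < 1" using assms(1) unfolding assms(2) by simp_all
    then have "(1 - p) * log 2 (1 - p) \<le> 0" by (simp add: mult_nonneg_nonpos)
    then show ?thesis using assms(1) by (simp add: mult_nonneg_nonpos)
  qed
  moreover have "N / (N + 1) * log 2 N < N / (N + 1) * log 2 (N + 1)"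
    using assms by (intro mult_strict_left_mono) auto
  ultimately show ?thesis by (simp add: algebra_simps)
qed

theorem theorem2:
  fixes n :: nat
  assumes "n \<ge> 1"
  shows "\<exists>f :: (nat \<Rightarrow> int) \<Rightarrow> complex.
           (\<forall>\<delta>\<in>cube n. cmod (f \<delta>) = 1) \<and>
           influence n f < 1 \<and>
           fourier_entropy n f > real n / real (n + 1) * log 2 (real n)"
proof -
  define p where "p = 1 / (real n + 1)"
  define g where "g x = Complex (sqrt (1 - p)) (sqrt p * of_int x)" for x :: int
  have p: "0 < p" "p < 1"
    using assms by (auto simp: p_def)
  have unimodular: "cmod (g 1) = 1" "cmod (g (-1)) = 1"
    using p by (simp_all add: g_def complex_norm)
  have "(g 1 - g (-1)) / 2 = Complex 0 (sqrt p)"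
    by (simp add: g_def complex_eq_iff)
  then have weight: "(cmod ((g 1 - g (-1)) / 2))\<^sup>2 = p"
    using p by (simp add: complex_norm)
  have "real n * p < 1"
    unfolding p_def by (simp add: field_simps)
  then have "influence n (tensor_power n g) < 1"
    by (simp add: influence_tensor_power[OF unimodular weight])
  moreover have "real n / real (n + 1) * log 2 (real n) < fourier_entropy n (tensor_power n g)"
    using binary_entropy_inverse_succ_gt[OF _ p_def] assms
    unfolding fourier_entropy_tensor_power[OF unimodular weight p] by (simp add: add.commute)
  ultimately show ?thesis
    using norm_tensor_power[OF unimodular, of _ n] by (intro exI[of _ "tensor_power n g"]) simp
qed

end
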